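(* Let $\mathcal I=\{\emptyset\}\otimes\mathrm{Fin}$. (1) Every Sierpiński set (as a subspace of $\mathbb R$) belongs to the classes $(\mathcal I\text{-p},\mathcal I\text{-}\sigma\text{-u})$, $(\mathcal I\text{-p},\mathcal I\text{-qn})$ and $(\mathcal I\text{-qn},\mathcal I\text{-}\sigma\text{-u})$. (2) It is consistent with ZFC (e.g. it holds under the Continuum Hypothesis) that there exists an uncountable subspace of $\mathbb R$ belonging to the classes $(\mathcal I\text{-p},\mathcal I\text{-}\sigma\text{-u})$, $(\mathcal I\text{-p},\mathcal I\text{-qn})$ and $(\mathcal I\text{-qn},\mathcal I\text{-}\sigma\text{-u})$.
   Context: $\{\emptyset\}\otimes\mathrm{Fin}=\{A\subseteq\omega\times\omega:\{y:(x,y)\in A\}\text{ is finite for every }x\in\omega\}$, an ideal on the countable set $\omega\times\omega$ (an ideal on a countably infinite set $S$ is a family of subsets of $S$ closed under finite unions and subsets, containing all finite sets, not containing $S$); all notions below for ideals on $\omega$ are used for it via indexing sequences by $\omega\times\omega$ (equivalently via a bijection with $\omega$). A real sequence $(a_n)$ is $\mathcal I$-convergent to $0$ if $\{n:|a_n|\ge\varepsilon\}\in\mathcal I$ for all $\varepsilon>0$. For a sequence $(f_n)$ of real functions on a set $X$: $\mathcal I$-p means $(f_n(x))$ is $\mathcal I$-convergent to $0$ for each $x$; $\mathcal I$-u means $\{n:\exists x\in X\,(|f_n(x)|\ge\varepsilon)\}\in\mathcal I$ for each $\varepsilon>0$; $\mathcal I$-$\sigma$-u means $X=\bigcup_{k\in\omega}X_k$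 with $(f_n\restriction X_k)$ $\mathcal I$-u convergent to $0$ for each $k$; $\mathcal I$-qn means there is a sequence $(\varepsilon_n)$ of positive reals $\mathcal I$-convergent to $0$ with $\{n:|f_n(x)|\ge\varepsilon_n\}\in\mathcal I$ for each $x$. $\mathcal C(X)$ = continuous real functions on $X$. Normal space = Hausdorff space in which disjoint closed sets have disjoint open neighbourhoods. $(\alpha,\beta)$ is the class of normal spaces $X$ such that for all sequences $(f_n)$ in $\mathcal C(X)$, $f_n\to0$ in sense $\alpha$ iff in sense $\beta$. A Sierpiński set is an uncountable $S\subseteq\mathbb R$ such that $S\cap N$ is countable for every Lebesgue null set $N\subseteq\mathbb R$. *)

theory Defs
  imports "HOL-Analysis.Analysis" "HOL-Library.Equipollence"
begin

definition emptyFin :: "(nat \<times> nat) set set" where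
  "emptyFin = {A. \<forall>x. finite {y. (x, y) \<in> A}}"

definition Iconv0 :: "'i set set \<Rightarrow> ('i \<Rightarrow> real) \<Rightarrow> bool" where
  "Iconv0 I a \<longleftrightarrow> (\<forall>\<epsilon>>0. {n. \<bar>a n\<bar> \<ge> \<epsilon>} \<in> I)"

definition I_p :: "'i set set \<Rightarrow> 'a set \<Rightarrow> ('i \<Rightarrow> 'a \<Rightarrow> real) \<Rightarrow> bool" where
  "I_p I X f \<longleftrightarrow> (\<forall>x\<in>X. Iconv0 I (\<lambda>n. f n x))"

definition I_u :: "'i set set \<Rightarrow> 'a set \<Rightarrow> ('i \<Rightarrow> 'a \<Rightarrow> real) \<Rightarrow> bool" where
  "I_u I X f \<longleftrightarrow> (\<forall>\<epsilon>>0. {n. \<exists>x\<in>X. \<bar>f n x\<bar> \<ge> \<epsilon>} \<in> I)"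

definition I_sigma_u :: "'i set set \<Rightarrow> 'a set \<Rightarrow> ('i \<Rightarrow> 'a \<Rightarrow> real) \<Rightarrow> bool" where
  "I_sigma_u I X f \<longleftrightarrow> (\<exists>Xk :: nat \<Rightarrow> 'a set. X = (\<Union>k. Xk k) \<and> (\<forall>k. I_u I (Xk k) f))"

definition I_qn :: "'i set set \<Rightarrow> 'a set \<Rightarrow> ('i \<Rightarrow> 'a \<Rightarrow> real) \<Rightarrow> bool" where
  "I_qn I X f \<longleftrightarrow> (\<exists>e :: 'i \<Rightarrow> real. (\<forall>n. e n > 0) \<and> Iconv0 I e \<and>
                       (\<forall>x\<in>X. {n. \<bar>f n x\<bar> \<ge> e n} \<in> I))"

definition in_class :: "real set \<Rightarrow> ('i set set \<Rightarrow> real set \<Rightarrow> ('i \<Rightarrow> real \<Rightarrow> real) \<Rightarrow> bool)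
     \<Rightarrow> ('i set set \<Rightarrow> real set \<Rightarrow> ('i \<Rightarrow> real \<Rightarrow> real) \<Rightarrow> bool) \<Rightarrow> 'i set set \<Rightarrow> bool" where
  "in_class X \<alpha> \<beta> I \<longleftrightarrow>
     Hausdorff_space (subtopology euclideanreal X) \<and> normal_space (subtopology euclideanreal X) \<and>
     (\<forall>f :: 'i \<Rightarrow> real \<Rightarrow> real.
        (\<forall>n. continuous_map (subtopology euclideanreal X) euclideanreal (f n)) \<longrightarrow>
        (\<alpha> I X f \<longleftrightarrow> \<beta> I X f))"

definition sierpinski_set :: "real set \<Rightarrow> bool" where
  "sierpinski_set S \<longleftrightarrow> uncountable S \<and> (\<forall>N \<in> null_sets lebesgue. countable (S \<inter> N))"

definition CH :: bool where
  "CH \<longleftrightarrow> (\<forall>A :: real set. uncountable A \<longrightarrow> A \<approx> (UNIV :: real set))"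

end

theory Submission
  imports Defs
begin

(* Membership of A in {emptyset} (x) Fin says that every row m |-> (k, m) eventually leaves A,
  so the three modes of convergence are the classical pointwise, sigma-uniform and quasi-normal
  convergence, required simultaneously along countably many rows.  Sigma-uniform convergence
  implies quasi-normal convergence by choosing, row by row, one null sequence of precisions that
  eventually dominates all countably many uniform rates, and both imply pointwise convergence.
  It remains to show that on a Sierpinski set S pointwise convergence of continuous functions is
  sigma-uniform.  The set where row k stays below 1/(i+1) from time M on is the trace on S of a
  closed set B k i M, increasing in M.  By an Egorov-type argument, countably many such increasing
  Borel families are simultaneously absorbed at finite stages by countably many sets covering
  everything outside a null set; S meets that null set in countably many points, which are added
  as singletons.  Under CH a Sierpinski set is obtained by enumerating a cofinal family of null
  sets in order type omega_1 and picking the alpha-th point outside the first alpha of them. *)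

section \<open>Convergence with respect to \<open>{\<emptyset>} \<otimes> Fin\<close>\<close>

lemma emptyFin_iff_eventually:
  "A \<in> emptyFin \<longleftrightarrow> (\<forall>k. \<forall>\<^sub>F m in sequentially. (k, m) \<notin> A)"
  by (simp add: emptyFin_def eventually_cofinite flip: cofinite_eq_sequentially)

lemma emptyFin_downward: "B \<in> emptyFin \<Longrightarrow> A \<subseteq> B \<Longrightarrow> A \<in> emptyFin"
  unfolding emptyFin_iff_eventually by (blast intro: eventually_mono)

lemma emptyFin_Un: "A \<in> emptyFin \<Longrightarrow> B \<in> emptyFin \<Longrightarrow> A \<union> B \<in> emptyFin"
  unfolding emptyFin_iff_eventually by (auto intro: eventually_conj)

lemma Iconv0_emptyFin_iff: "Iconv0 emptyFin a \<longleftrightarrow> (\<forall>k. (\<lambda>m. a (k, m)) \<longlonglongrightarrow> 0)"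
  by (auto simp: Iconv0_def emptyFin_iff_eventually tendsto_iff not_le)

lemma I_u_emptyFin_iff:
  "I_u emptyFin X f \<longleftrightarrow> (\<forall>k. uniform_limit X (\<lambda>m. f (k, m)) (\<lambda>_. 0) sequentially)"
  by (auto simp: I_u_def emptyFin_iff_eventually uniform_limit_iff not_le)

lemma I_qn_emptyFin_iff:
  "I_qn emptyFin X f \<longleftrightarrow> (\<exists>e. (\<forall>n. e n > 0) \<and> (\<forall>k. (\<lambda>m. e (k, m)) \<longlonglongrightarrow> 0) \<and>
     (\<forall>x\<in>X. \<forall>k. \<forall>\<^sub>F m in sequentially. \<bar>f (k, m) x\<bar> < e (k, m)))"
  by (auto simp: I_qn_def Iconv0_emptyFin_iff emptyFin_iff_eventually not_le)

lemma I_sigma_u_imp_I_p: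
  assumes downward: "\<And>A B. B \<in> I \<Longrightarrow> A \<subseteq> B \<Longrightarrow> A \<in> I" and "I_sigma_u I X f"
  shows "I_p I X f"
  unfolding I_p_def Iconv0_def
proof (intro ballI allI impI)
  fix x and \<epsilon> :: real
  assume "x \<in> X" "\<epsilon> > 0"
  obtain Y :: "nat \<Rightarrow> _" where "X = (\<Union>j. Y j)" and u: "\<And>j. I_u I (Y j) f"
    using \<open>I_sigma_u I X f\<close> unfolding I_sigma_u_def by blast
  with \<open>x \<in> X\<close> obtain j where "x \<in> Y j" by blast
  have "{n. \<exists>y\<in>Y j. \<bar>f n y\<bar> \<ge> \<epsilon>} \<in> I"
    using u[of j] \<open>\<epsilon> > 0\<close> unfolding I_u_def by blast
  moreover have "{n. \<bar>f n x\<bar> \<ge> \<epsilon>} \<subseteq> {n. \<exists>y\<in>Y j. \<bar>f n y\<bar> \<ge> \<epsilon>}"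
    using \<open>x \<in> Y j\<close> by blast
  ultimately show "{n. \<bar>f n x\<bar> \<ge> \<epsilon>} \<in> I"
    by (rule downward)
qed

lemma I_qn_imp_I_p:
  assumes downward: "\<And>A B. B \<in> I \<Longrightarrow> A \<subseteq> B \<Longrightarrow> A \<in> I"
    and union: "\<And>A B. A \<in> I \<Longrightarrow> B \<in> I \<Longrightarrow> A \<union> B \<in> I"
    and "I_qn I X f"
  shows "I_p I X f"
  unfolding I_p_def Iconv0_def
proof (intro ballI allI impI)
  fix x and \<epsilon> :: real
  assume "x \<in> X" "\<epsilon> > 0"
  obtain e where "Iconv0 I e" and qn: "\<forall>x\<in>X. {n. \<bar>f n x\<bar> \<ge> e n} \<in> I"
    using \<open>I_qn I X f\<close> unfolding I_qn_def by blast
  have "{n. \<bar>f n x\<bar> \<ge> e n} \<union> {n. \<bar>e n\<bar> \<ge> \<epsilon>} \<in> I"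
    using qn \<open>x \<in> X\<close> \<open>Iconv0 I e\<close> \<open>\<epsilon> > 0\<close> unfolding Iconv0_def by (simp add: union)
  then show "{n. \<bar>f n x\<bar> \<ge> \<epsilon>} \<in> I"
    by (rule downward) auto
qed

lemma I_sigma_u_of_countable_cover:
  assumes "{} \<in> I" "countable \<Y>" "\<Union>\<Y> = X" "\<And>Y. Y \<in> \<Y> \<Longrightarrow> I_u I Y f"
  shows "I_sigma_u I X f"
  unfolding I_sigma_u_def
proof (intro exI conjI allI)
  let ?Y = "from_nat_into (insert {} \<Y>)"
  have range_Y: "range ?Y = insert {} \<Y>"
    using \<open>countable \<Y>\<close> by simp
  then show "X = (\<Union>k. ?Y k)"
    using \<open>\<Union>\<Y> = X\<close> by simp
  have "I_u I {} f"
    using \<open>{} \<in> I\<close> by (simp add: I_u_def)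
  moreover have "?Y k \<in> insert {} \<Y>" for k
    using range_Y by blast
  ultimately show "I_u I (?Y k) f" for k
    using assms(4) by (metis insertE)
qed

lemma diagonal_null_sequence:
  fixes P :: "nat \<Rightarrow> real \<Rightarrow> nat \<Rightarrow> bool"
  assumes "\<And>j \<epsilon>. \<epsilon> > 0 \<Longrightarrow> \<forall>\<^sub>F m in sequentially. P j \<epsilon> m"
  shows "\<exists>e. (\<forall>m. e m > 0) \<and> e \<longlonglongrightarrow> 0 \<and> (\<forall>j. \<forall>\<^sub>F m in sequentially. P j (e m) m)"
proof -
  have "\<exists>N. \<forall>m\<ge>N. P j (inverse (real (Suc i))) m" for j i
    using assms[of "inverse (real (Suc i))" j] by (simp add: eventually_sequentially)
  then obtain N where N: "\<And>j i m. N j i \<le> m \<Longrightarrow> P j (inverse (real (Suc i))) m"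
    by metis
  define good where "good m = {i. i \<le> m \<and> (\<forall>j\<le>i. N j i \<le> m)}" for m
  \<comment> \<open>At time \<open>m\<close> the rows \<open>j \<le> g m\<close> have all reached precision \<open>1/(g m + 1)\<close>.\<close>
  define g where "g m = Max (insert 0 (good m))" for m
  define e where "e m = inverse (real (Suc (g m)))" for m
  define start where "start i = i + (\<Sum>j\<le>i. N j i)" for i
  have fin_good: "finite (good m)" for m
    unfolding good_def by auto
  have good_start: "i \<in> good m" if "start i \<le> m" for i m
  proof -
    have "N j i \<le> (\<Sum>j\<le>i. N j i)" if "j \<le> i" for j
      using that by (intro member_le_sum) auto
    with that show ?thesis
      unfolding good_def start_def by fastforce
  qed
  have g_ge: "i \<le> g m" if "start i \<le> m" for i m
    using good_start[OF that] fin_good unfolding g_def by simp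
  have "filterlim g at_top sequentially"
    unfolding filterlim_at_top eventually_sequentially using g_ge by blast
  then have "e \<longlonglongrightarrow> 0"
    unfolding e_def by (rule filterlim_compose[OF LIMSEQ_inverse_real_of_nat])
  moreover have "\<forall>\<^sub>F m in sequentially. P j (e m) m" for j
    unfolding eventually_sequentially
  proof (intro exI allI impI)
    fix m assume "start j \<le> m"
    then have "j \<in> good m" "j \<le> g m"
      using good_start g_ge by auto
    moreover have "g m \<in> insert 0 (good m)"
      unfolding g_def using fin_good by (intro Max_in) auto
    ultimately have "g m \<in> good m"
      by (cases "g m = 0") auto
    with \<open>j \<le> g m\<close> show "P j (e m) m"
      unfolding good_def e_def by (blast intro: N)
  qed
  moreover have "\<forall>m. e m > 0"
    by (simp add: e_def)
  ultimately show ?thesis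
    by blast
qed

lemma I_sigma_u_imp_I_qn_emptyFin:
  assumes "I_sigma_u emptyFin X f"
  shows "I_qn emptyFin X f"
proof -
  obtain Y :: "nat \<Rightarrow> _" where X: "X = (\<Union>j. Y j)"
    and u: "\<And>j k. uniform_limit (Y j) (\<lambda>m. f (k, m)) (\<lambda>_. 0) sequentially"
    using assms unfolding I_sigma_u_def I_u_emptyFin_iff by blast
  have "\<forall>k. \<exists>E. (\<forall>m. E m > 0) \<and> E \<longlonglongrightarrow> 0 \<and>
      (\<forall>j. \<forall>\<^sub>F m in sequentially. \<forall>x\<in>Y j. \<bar>f (k, m) x\<bar> < E m)"
    by (intro allI diagonal_null_sequence) (use u in \<open>simp add: uniform_limit_iff\<close>)
  then obtain E where E: "\<And>k m. E k m > 0" "\<And>k. E k \<longlonglongrightarrow> 0"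
    "\<And>k j. \<forall>\<^sub>F m in sequentially. \<forall>x\<in>Y j. \<bar>f (k, m) x\<bar> < E k m"
    by (auto dest!: choice)
  show ?thesis
    unfolding I_qn_emptyFin_iff
  proof (intro exI[of _ "\<lambda>(k, m). E k m"] conjI ballI allI)
    fix x k assume "x \<in> X"
    then obtain j where "x \<in> Y j" using X by blast
    with E(3)[where j = j and k = k]
    show "\<forall>\<^sub>F m in sequentially. \<bar>f (k, m) x\<bar> < (\<lambda>(k, m). E k m) (k, m)"
      by (auto elim: eventually_mono)
  qed (use E in auto)
qed

lemma in_classes_if_I_p_imp_I_sigma_u:
  assumes "\<And>f :: nat \<times> nat \<Rightarrow> real \<Rightarrow> real. (\<And>n. continuous_on X (f n)) \<Longrightarrow>
      I_p emptyFin X f \<Longrightarrow> I_sigma_u emptyFin X f"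
  shows "in_class X I_p I_sigma_u emptyFin \<and> in_class X I_p I_qn emptyFin \<and>
      in_class X I_qn I_sigma_u emptyFin"
proof (unfold in_class_def continuous_map_iff_continuous, intro conjI allI impI)
  fix f :: "nat \<times> nat \<Rightarrow> real \<Rightarrow> real"
  assume "\<forall>n. continuous_on X (f n)"
  then have p_imp_sigma_u: "I_p emptyFin X f \<Longrightarrow> I_sigma_u emptyFin X f"
    using assms by blast
  have sigma_u_imp_p: "I_sigma_u emptyFin X f \<Longrightarrow> I_p emptyFin X f"
    using emptyFin_downward by (rule I_sigma_u_imp_I_p)
  have qn_imp_p: "I_qn emptyFin X f \<Longrightarrow> I_p emptyFin X f"
    using emptyFin_downward emptyFin_Un by (rule I_qn_imp_I_p)
  note sigma_u_imp_qn = I_sigma_u_imp_I_qn_emptyFin[of X f]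
  show "I_p emptyFin X f \<longleftrightarrow> I_sigma_u emptyFin X f"
    using p_imp_sigma_u sigma_u_imp_p by blast
  show "I_p emptyFin X f \<longleftrightarrow> I_qn emptyFin X f"
    using p_imp_sigma_u sigma_u_imp_qn qn_imp_p by blast
  show "I_qn emptyFin X f \<longleftrightarrow> I_sigma_u emptyFin X f"
    using qn_imp_p p_imp_sigma_u sigma_u_imp_qn by blast
qed (simp_all add: Hausdorff_space_subtopology metrizable_imp_normal_space
    metrizable_space_subtopology metrizable_space_euclidean)

section \<open>Simultaneous Egorov-type absorption\<close>

lemma ennreal_le_inverse_Suc_imp_zero:
  fixes x :: ennreal
  assumes "\<And>i. x \<le> ennreal (inverse (real (Suc i)))"
  shows "x = 0"
proof -
  have "(\<lambda>i. ennreal (inverse (real (Suc i)))) \<longlonglongrightarrow> 0"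
    using tendsto_ennrealI[OF LIMSEQ_inverse_real_of_nat] by simp
  then have "x \<le> 0"
    using assms by (intro LIMSEQ_le_const) auto
  then show ?thesis
    by simp
qed

lemma emeasure_diff_exhaustion_less:
  assumes "A \<in> sets M" "emeasure M A \<noteq> \<infinity>" "range B \<subseteq> sets M" "incseq B"
    and "A \<subseteq> (\<Union>n. B n)" "\<delta> > 0"
  shows "\<exists>n. emeasure M (A - B n) < \<delta>"
proof -
  have "(\<lambda>n. emeasure M (A - B n)) \<longlonglongrightarrow> emeasure M (\<Inter>n. A - B n)"
  proof (rule Lim_emeasure_decseq)
    show "range (\<lambda>n. A - B n) \<subseteq> sets M" "decseq (\<lambda>n. A - B n)"
      using assms(1,3,4) by (auto simp: decseq_def incseq_def)
    show "emeasure M (A - B n) \<noteq> \<infinity>" for n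
      using assms(1,2) by (metis Diff_subset emeasure_mono infinity_ennreal_def neq_top_trans)
  qed
  moreover have "(\<Inter>n. A - B n) = {}"
    using assms(5) by blast
  ultimately have "(\<lambda>n. emeasure M (A - B n)) \<longlonglongrightarrow> 0"
    by (metis emeasure_empty)
  then have "\<forall>\<^sub>F n in sequentially. emeasure M (A - B n) < \<delta>"
    using \<open>\<delta> > 0\<close> by (rule order_tendstoD(2))
  then show ?thesis
    by (auto simp: eventually_sequentially)
qed

lemma exhaustions_small_remainders:
  fixes B :: "nat \<Rightarrow> nat \<Rightarrow> 'a set"
  assumes A: "A \<in> sets M" "emeasure M A \<noteq> \<infinity>"
    and B: "\<And>q n. B q n \<in> sets M" "\<And>q. incseq (B q)" and "\<epsilon> > 0"
  shows "\<exists>n. emeasure M (\<Union>q. A \<inter> (\<Union>m. B q m) - B q (n q)) \<le> ennreal \<epsilon>"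
proof -
  define w where "w q = \<epsilon> * (1/2) ^ Suc q" for q :: nat
  have "emeasure M (A \<inter> (\<Union>m. B q m)) \<noteq> \<infinity>" for q
    using A by (metis Int_lower1 emeasure_mono infinity_ennreal_def neq_top_trans)
  then have "\<exists>n. emeasure M (A \<inter> (\<Union>m. B q m) - B q n) < ennreal (w q)" for q
    using A(1) B \<open>\<epsilon> > 0\<close> unfolding w_def
    by (intro emeasure_diff_exhaustion_less) auto
  then obtain n where n: "\<And>q. emeasure M (A \<inter> (\<Union>m. B q m) - B q (n q)) < ennreal (w q)"
    by metis
  have "emeasure M (\<Union>q. A \<inter> (\<Union>m. B q m) - B q (n q))
      \<le> (\<Sum>q. emeasure M (A \<inter> (\<Union>m. B q m) - B q (n q)))"
    using A(1) B(1) by (intro emeasure_subadditive_countably) auto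
  also have "\<dots> \<le> (\<Sum>q. ennreal (w q))"
    using n by (intro suminf_le) (auto intro: less_imp_le)
  also have "\<dots> = ennreal \<epsilon>"
  proof -
    have "w sums (\<epsilon> * 1)"
      unfolding w_def by (intro sums_mult power_half_series)
    then show ?thesis
      using \<open>\<epsilon> > 0\<close> by (subst suminf_ennreal_eq) (auto simp: w_def)
  qed
  finally show ?thesis
    by blast
qed

lemma (in sigma_finite_measure) exhaustions_absorb_outside_null_set:
  fixes B :: "nat \<Rightarrow> nat \<Rightarrow> 'a set"
  assumes B: "\<And>q n. B q n \<in> sets M" "\<And>q. incseq (B q)"
  obtains Z \<P> where "Z \<in> null_sets M" "countable \<P>" "(\<Inter>q. \<Union>n. B q n) \<subseteq> Z \<union> \<Union>\<P>"
    "\<And>P q. P \<in> \<P> \<Longrightarrow> \<exists>n. P \<subseteq> B q n"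
proof -
  obtain A :: "nat \<Rightarrow> 'a set" where A: "range A \<subseteq> sets M" "(\<Union>L. A L) = space M"
    "\<And>L. emeasure M (A L) \<noteq> \<infinity>"
    using sigma_finite_incseq by metis
  define Bad where "Bad L n = (\<Union>q. A L \<inter> (\<Union>m. B q m) - B q (n q))" for L n
  have "\<exists>n. emeasure M (Bad L n) \<le> ennreal (inverse (real (Suc i)))" for L i
    unfolding Bad_def using A B by (intro exhaustions_small_remainders) auto
  then obtain n where n: "\<And>L i. emeasure M (Bad L (n L i)) \<le> ennreal (inverse (real (Suc i)))"
    by metis
  have Bad_sets: "Bad L m \<in> sets M" for L m
    unfolding Bad_def using A(1) B(1) by auto
  have "emeasure M (\<Inter>i. Bad L (n L i)) = 0" for L
  proof (rule ennreal_le_inverse_Suc_imp_zero)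
    fix i
    have "emeasure M (\<Inter>i. Bad L (n L i)) \<le> emeasure M (Bad L (n L i))"
      by (rule emeasure_mono) (auto simp: Bad_sets)
    also have "\<dots> \<le> ennreal (inverse (real (Suc i)))"
      by (rule n)
    finally show "emeasure M (\<Inter>i. Bad L (n L i)) \<le> ennreal (inverse (real (Suc i)))" .
  qed
  then have "(\<Inter>i. Bad L (n L i)) \<in> null_sets M" for L
    using Bad_sets by (auto intro: null_setsI)
  then have Z_null: "(\<Union>L. \<Inter>i. Bad L (n L i)) \<in> null_sets M"
    by (rule null_sets_UN)
  define P where "P L i = (\<Inter>q. B q (n L i q))" for L i
  have "countable (range (case_prod P))"
    by simp
  moreover have "(\<Inter>q. \<Union>n. B q n) \<subseteq> (\<Union>L. \<Inter>i. Bad L (n L i)) \<union> \<Union>(range (case_prod P))"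
  proof
    fix x assume x: "x \<in> (\<Inter>q. \<Union>n. B q n)"
    then have "x \<in> space M"
      using B(1) sets.sets_into_space by blast
    then obtain L where "x \<in> A L"
      using A(2) by blast
    show "x \<in> (\<Union>L. \<Inter>i. Bad L (n L i)) \<union> \<Union>(range (case_prod P))"
    proof (cases "\<forall>i. x \<in> Bad L (n L i)")
      case False
      then obtain i where "x \<notin> Bad L (n L i)" by blast
      with x \<open>x \<in> A L\<close> have "x \<in> P L i"
        unfolding Bad_def P_def by blast
      moreover have "P L i \<in> range (case_prod P)"
        using rangeI[of "case_prod P" "(L, i)"] by simp
      ultimately show ?thesis
        by (intro UnI2 UnionI)
    qed blast
  qed
  moreover have "\<exists>m. Q \<subseteq> B q m" if "Q \<in> range (case_prod P)" for Q q
  proof -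
    from that obtain L i where "Q = P L i" by auto
    then show ?thesis
      unfolding P_def by blast
  qed
  ultimately show thesis
    by (rule that[OF Z_null])
qed

section \<open>Pointwise convergence on Sierpinski sets\<close>

lemma sierpinski_cover_absorbed:
  fixes B :: "nat \<Rightarrow> nat \<Rightarrow> real set"
  assumes S: "\<forall>N\<in>null_sets lebesgue. countable (S \<inter> N)"
    and B: "\<And>q n. B q n \<in> sets borel" "\<And>q. incseq (B q)" "\<And>q. S \<subseteq> (\<Union>n. B q n)"
  obtains \<Y> where "countable \<Y>" "\<Union>\<Y> = S" "\<And>Y q. Y \<in> \<Y> \<Longrightarrow> \<exists>n. Y \<subseteq> B q n"
proof -
  have "B q n \<in> sets lborel" for q n
    using B(1) by simp
  then obtain Z \<P> where Z: "Z \<in> null_sets lborel" and "countable \<P>"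
    and cover: "(\<Inter>q. \<Union>n. B q n) \<subseteq> Z \<union> \<Union>\<P>" and absorb: "\<And>P q. P \<in> \<P> \<Longrightarrow> \<exists>n. P \<subseteq> B q n"
    by (rule lborel.exhaustions_absorb_outside_null_set[of B, OF _ B(2)]) blast+
  have "countable (S \<inter> Z)"
    using S null_sets_completionI[OF Z] by blast
  have "S \<subseteq> Z \<union> \<Union>\<P>"
    using B(3) cover by blast
  show thesis
  proof (rule that[of "(\<lambda>P. S \<inter> P) ` \<P> \<union> (\<lambda>x. {x}) ` (S \<inter> Z)"])
    show "countable ((\<lambda>P. S \<inter> P) ` \<P> \<union> (\<lambda>x. {x}) ` (S \<inter> Z))"
      using \<open>countable \<P>\<close> \<open>countable (S \<inter> Z)\<close> by simp
    show "\<Union>((\<lambda>P. S \<inter> P) ` \<P> \<union> (\<lambda>x. {x}) ` (S \<inter> Z)) = S"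
      using \<open>S \<subseteq> Z \<union> \<Union>\<P>\<close> by auto
    show "\<exists>n. Y \<subseteq> B q n" if "Y \<in> (\<lambda>P. S \<inter> P) ` \<P> \<union> (\<lambda>x. {x}) ` (S \<inter> Z)" for Y q
      using that B(3)[of q] absorb[of _ q] by fastforce
  qed
qed

lemma continuous_on_closed_sublevel_traces:
  fixes f :: "'i \<Rightarrow> 'a::topological_space \<Rightarrow> real"
  assumes "\<And>n. continuous_on S (f n)"
  obtains T where "\<And>n c. closed (T n c)" "\<And>n c. S \<inter> T n c = {x\<in>S. \<bar>f n x\<bar> \<le> c}"
proof -
  have "\<exists>T. closed T \<and> S \<inter> T = {x\<in>S. \<bar>f n x\<bar> \<le> c}" for n c
  proof -
    have "closedin (top_of_set S) (S \<inter> f n -` {-c..c})"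
      using assms by (rule continuous_closedin_preimage) simp
    moreover have "S \<inter> f n -` {-c..c} = {x\<in>S. \<bar>f n x\<bar> \<le> c}"
      by (auto simp: abs_le_iff)
    ultimately obtain T where "closed T" "{x\<in>S. \<bar>f n x\<bar> \<le> c} = S \<inter> T"
      unfolding closedin_closed by auto
    then show ?thesis
      by (intro exI[of _ T]) simp
  qed
  then have "closed (T n c) \<and> S \<inter> T n c = {x\<in>S. \<bar>f n x\<bar> \<le> c}"
    if "T = (\<lambda>n c. SOME T. closed T \<and> S \<inter> T = {x\<in>S. \<bar>f n x\<bar> \<le> c})" for T n c
    unfolding that by (rule someI_ex)
  then show thesis
    using that by blast
qed

lemma sierpinski_I_p_imp_I_sigma_u:
  fixes f :: "nat \<times> nat \<Rightarrow> real \<Rightarrow> real"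
  assumes S: "\<forall>N\<in>null_sets lebesgue. countable (S \<inter> N)"
    and "\<And>n. continuous_on S (f n)" and "I_p emptyFin S f"
  shows "I_sigma_u emptyFin S f"
proof -
  obtain T where T: "\<And>n c. closed (T n c)" "\<And>n c. S \<inter> T n c = {x\<in>S. \<bar>f n x\<bar> \<le> c}"
    using continuous_on_closed_sublevel_traces \<open>\<And>n. continuous_on S (f n)\<close> by blast
  define B where "B k i M = (\<Inter>m\<in>{M..}. T (k, m) (inverse (real (Suc i))))" for k i M
  have small_on_B: "\<bar>f (k, m) x\<bar> \<le> inverse (real (Suc i))" if "x \<in> S \<inter> B k i M" "m \<ge> M" for k i M m x
    using that T(2)[of "(k, m)"] unfolding B_def by blast
  have S_sub: "S \<subseteq> (\<Union>M. B k i M)" for k i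
  proof
    fix x assume "x \<in> S"
    with \<open>I_p emptyFin S f\<close> have "(\<lambda>m. f (k, m) x) \<longlonglongrightarrow> 0"
      by (simp add: I_p_def Iconv0_emptyFin_iff)
    then have "\<forall>\<^sub>F m in sequentially. dist (f (k, m) x) 0 < inverse (real (Suc i))"
      by (simp add: tendsto_iff)
    then obtain M where "\<bar>f (k, m) x\<bar> \<le> inverse (real (Suc i))" if "m \<ge> M" for m
      unfolding eventually_sequentially by (auto intro: less_imp_le)
    with \<open>x \<in> S\<close> T(2) have "x \<in> B k i M"
      unfolding B_def by blast
    then show "x \<in> (\<Union>M. B k i M)"
      by blast
  qed
  have B_sets: "B k i M \<in> sets borel" for k i M
    unfolding B_def using T(1) by (intro borel_closed closed_INT) auto
  have B_incseq: "incseq (B k i)" for k i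
    unfolding B_def incseq_def by auto
  obtain \<Y> where "countable \<Y>" and S_eq: "\<Union>\<Y> = S"
    and absorb: "\<And>Y q. Y \<in> \<Y> \<Longrightarrow> \<exists>M. Y \<subseteq> B (fst (prod_decode q)) (snd (prod_decode q)) M"
    by (rule sierpinski_cover_absorbed[OF S,
          where B = "\<lambda>q. B (fst (prod_decode q)) (snd (prod_decode q))", OF B_sets B_incseq S_sub])
      blast
  have "I_u emptyFin Y f" if Y: "Y \<in> \<Y>" for Y
    unfolding I_u_emptyFin_iff uniform_limit_sequentially_iff
  proof (intro allI impI)
    fix k and e :: real assume "e > 0"
    then obtain i where i: "inverse (real (Suc i)) < e"
      using reals_Archimedean by blast
    obtain M where "Y \<subseteq> B k i M"
      using absorb[OF Y, of "prod_encode (k, i)"] by auto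
    moreover have "Y \<subseteq> S"
      using S_eq Y by blast
    ultimately have "\<forall>m\<ge>M. \<forall>x\<in>Y. \<bar>f (k, m) x\<bar> \<le> inverse (real (Suc i))"
      using small_on_B by blast
    with i show "\<exists>M. \<forall>m\<ge>M. \<forall>x\<in>Y. dist (f (k, m) x) 0 < e"
      by (auto intro: le_less_trans)
  qed
  then show ?thesis
    using \<open>countable \<Y>\<close> S_eq by (intro I_sigma_u_of_countable_cover) (auto simp: emptyFin_def)
qed

section \<open>A Sierpinski set under CH\<close>

lemma null_set_subset_null_Inter_open:
  fixes N :: "'a::euclidean_space set"
  assumes N: "N \<in> null_sets lebesgue"
  obtains T where "\<And>i::nat. open (T i)" "N \<subseteq> (\<Inter>i. T i)" "(\<Inter>i. T i) \<in> null_sets lebesgue"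
proof -
  have ex_T: "\<exists>T. open T \<and> N \<subseteq> T \<and> emeasure lebesgue T < ennreal (inverse (real (Suc i)))" for i
  proof -
    obtain T where T: "open T" "N \<subseteq> T" "T - N \<in> lmeasurable"
      "emeasure lebesgue (T - N) < ennreal (inverse (real (Suc i)))"
      by (rule sets_lebesgue_outer_open[of N "inverse (real (Suc i))"]) (use N in auto)
    moreover have "emeasure lebesgue (T - N) = emeasure lebesgue T"
      using N T(1) by (intro emeasure_Diff_null_set) (auto simp: borel_open)
    ultimately show ?thesis
      by (intro exI[of _ T]) simp
  qed
  define T where "T i = (SOME T. open T \<and> N \<subseteq> T \<and> emeasure lebesgue T < ennreal (inverse (real (Suc i))))" for i
  have T: "open (T i)" "N \<subseteq> T i" "emeasure lebesgue (T i) < ennreal (inverse (real (Suc i)))" for i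
    using someI_ex[OF ex_T[of i]] unfolding T_def by blast+
  have "emeasure lebesgue (\<Inter>i. T i) = 0"
  proof (rule ennreal_le_inverse_Suc_imp_zero)
    fix i
    have "emeasure lebesgue (\<Inter>i. T i) \<le> emeasure lebesgue (T i)"
      by (rule emeasure_mono) (use T(1) in \<open>auto simp: borel_open\<close>)
    also have "\<dots> \<le> ennreal (inverse (real (Suc i)))"
      using T(3)[of i] by (rule less_imp_le)
    finally show "emeasure lebesgue (\<Inter>i. T i) \<le> ennreal (inverse (real (Suc i)))" .
  qed
  moreover have "(\<Inter>i. T i) \<in> sets lebesgue"
    using T(1) by (auto simp: borel_open)
  ultimately have "(\<Inter>i. T i) \<in> null_sets lebesgue"
    by (rule null_setsI)
  moreover have "N \<subseteq> (\<Inter>i. T i)"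
    using T(2) by blast
  ultimately show thesis
    using that T(1) by blast
qed

lemma ex_cofinal_null_sets_family:
  "\<exists>C :: nat set \<Rightarrow> 'a::euclidean_space set. (\<forall>A. C A \<in> null_sets lebesgue) \<and>
     (\<forall>N\<in>null_sets lebesgue. \<exists>A. N \<subseteq> C A)"
proof -
  obtain b :: "nat \<Rightarrow> 'a set"
    where b_basis: "\<And>S. open S \<Longrightarrow> \<exists>k. S = \<Union>{b n |n. n \<in> k}"
    by (rule univ_second_countable_sequence) blast
  define G where "G A = (\<Inter>i. \<Union>{b n |n. prod_encode (i, n) \<in> A})" for A
  define C where "C A = (if G A \<in> null_sets lebesgue then G A else {})" for A
  have "\<exists>A. N \<subseteq> C A" if N: "N \<in> null_sets lebesgue" for N
  proof -
    obtain T :: "nat \<Rightarrow> 'a set"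
      where T: "\<And>i. open (T i)" "N \<subseteq> (\<Inter>i. T i)" "(\<Inter>i. T i) \<in> null_sets lebesgue"
      using null_set_subset_null_Inter_open[OF N] by blast
    define k where "k i = (SOME k. T i = \<Union>{b n |n. n \<in> k})" for i
    have k: "T i = \<Union>{b n |n. n \<in> k i}" for i
      unfolding k_def using b_basis[OF T(1)] by (rule someI_ex)
    define A where "A = {prod_encode (i, n) |i n. n \<in> k i}"
    have "prod_encode (i, n) \<in> A \<longleftrightarrow> n \<in> k i" for i n
      unfolding A_def by (auto simp: prod_encode_eq)
    then have "G A = (\<Inter>i. T i)"
      unfolding G_def k by simp
    with T(3) have "C A = (\<Inter>i. T i)"
      unfolding C_def by simp
    with T(2) show ?thesis
      by blast
  qed
  moreover have "C A \<in> null_sets lebesgue" for A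
    unfolding C_def by simp
  ultimately show ?thesis
    by blast
qed

lemma ex_uncountable_with_countable_initial_segments:
  assumes "uncountable (UNIV :: 'a set)"
  obtains W :: "'a set" and lt where "uncountable W" "\<And>w. w \<in> W \<Longrightarrow> countable {v\<in>W. lt v w}"
    "\<And>v w. v \<in> W \<Longrightarrow> w \<in> W \<Longrightarrow> v \<noteq> w \<Longrightarrow> lt v w \<or> lt w v"
proof -
  obtain r :: "'a rel" where "well_order_on UNIV r"
    using well_order_on by blast
  then have wf: "wf (r - Id)" and total: "\<And>x y. x \<noteq> y \<Longrightarrow> (x, y) \<in> r \<or> (y, x) \<in> r"
    unfolding well_order_on_def linear_order_on_def total_on_def by auto
  define lt where "lt x y \<longleftrightarrow> (x, y) \<in> r - Id" for x y
  have lt_total: "x \<noteq> y \<Longrightarrow> lt x y \<or> lt y x" for x y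
    unfolding lt_def using total by auto
  define U where "U = {x. uncountable {y. lt y x}}"
  show thesis
  proof (cases "U = {}")
    case True
    then show ?thesis
      using that[of UNIV lt] assms lt_total unfolding U_def by auto
  next
    case False
    then obtain z where "z \<in> U" and z_min: "\<And>y. (y, z) \<in> r - Id \<Longrightarrow> y \<notin> U"
      using wfE_min'[OF wf] by metis
    have "countable {v\<in>{y. lt y z}. lt v w}" if "w \<in> {y. lt y z}" for w
    proof -
      have "w \<notin> U"
        using z_min that unfolding lt_def by auto
      then show ?thesis
        unfolding U_def by (auto intro: countable_subset[rotated])
    qed
    with \<open>z \<in> U\<close> show ?thesis
      using that[of "{y. lt y z}" lt] lt_total unfolding U_def by auto
  qed
qed

lemma ex_not_in_null_set:
  fixes N :: "'a::euclidean_space set"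
  assumes "N \<in> null_sets lebesgue"
  shows "\<exists>x. x \<notin> N"
proof -
  have "N \<noteq> UNIV"
  proof
    assume "N = UNIV"
    with assms have "emeasure lebesgue (UNIV :: 'a set) = 0"
      by auto
    then show False
      using emeasure_completion[of UNIV lborel] by simp
  qed
  then show ?thesis
    by blast
qed

lemma sierpinski_set_from_enumeration:
  fixes W :: "'a set" and N :: "'a \<Rightarrow> real set"
  assumes "uncountable W" and segments: "\<And>w. w \<in> W \<Longrightarrow> countable {v\<in>W. lt v w}"
    and total: "\<And>v w. v \<in> W \<Longrightarrow> w \<in> W \<Longrightarrow> v \<noteq> w \<Longrightarrow> lt v w \<or> lt w v"
    and null: "\<And>w. w \<in> W \<Longrightarrow> N w \<in> null_sets lebesgue"
    and cofinal: "\<And>Z. Z \<in> null_sets lebesgue \<Longrightarrow> \<exists>w\<in>W. Z \<subseteq> N w"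
  shows "\<exists>S. sierpinski_set S"
proof -
  define below where "below w = insert w {v\<in>W. lt v w}" for w
  have below_countable: "countable (below w)" if "w \<in> W" for w
    unfolding below_def using segments[OF that] by simp
  have "(\<Union>v\<in>below w. N v) \<in> null_sets lebesgue" if "w \<in> W" for w
    using below_countable[OF that] null that unfolding below_def by (intro null_sets_UN') auto
  then have "\<forall>w\<in>W. \<exists>x. x \<notin> (\<Union>v\<in>below w. N v)"
    using ex_not_in_null_set by blast
  then obtain x where x: "\<forall>w\<in>W. x w \<notin> (\<Union>v\<in>below w. N v)"
    by (auto dest!: bchoice)
  have hit_below: "w \<in> below v" if "v \<in> W" "w \<in> W" "x w \<in> N v" for v w
  proof (rule ccontr)
    assume "w \<notin> below v"
    with total[OF that(1,2)] have "v \<in> below w"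
      unfolding below_def using that(1,2) by auto
    with x that(2,3) show False
      by blast
  qed
  have "countable (x ` W \<inter> Z)" if Z: "Z \<in> null_sets lebesgue" for Z
  proof -
    obtain v where "v \<in> W" "Z \<subseteq> N v"
      using cofinal[OF Z] by blast
    then have "x ` W \<inter> Z \<subseteq> x ` below v"
      using hit_below by blast
    moreover have "countable (x ` below v)"
      using below_countable[OF \<open>v \<in> W\<close>] by simp
    ultimately show ?thesis
      by (rule countable_subset)
  qed
  moreover have "uncountable (x ` W)"
  proof
    assume "countable (x ` W)"
    then have "x ` W \<in> null_sets lebesgue"
      by (intro null_sets_completionI countable_imp_null_set_lborel)
    then obtain v where "v \<in> W" "x ` W \<subseteq> N v"
      using cofinal by blast
    then have "W \<subseteq> below v"
      using hit_below by blast
    with below_countable[OF \<open>v \<in> W\<close>] \<open>uncountable W\<close> show False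
      using countable_subset by blast
  qed
  ultimately show ?thesis
    unfolding sierpinski_set_def by blast
qed

lemma CH_imp_ex_sierpinski_set:
  assumes CH
  shows "\<exists>S. sierpinski_set S"
proof -
  obtain W :: "real set" and lt where W: "uncountable W" "\<And>w. w \<in> W \<Longrightarrow> countable {v\<in>W. lt v w}"
    "\<And>v w. v \<in> W \<Longrightarrow> w \<in> W \<Longrightarrow> v \<noteq> w \<Longrightarrow> lt v w \<or> lt w v"
    using ex_uncountable_with_countable_initial_segments uncountable_UNIV_real by blast
  have "W \<approx> (UNIV :: nat set set)"
    using \<open>CH\<close> W(1) nat_sets_eqpoll_reals unfolding CH_def by (meson eqpoll_sym eqpoll_trans)
  then obtain h where h: "bij_betw h W (UNIV :: nat set set)"
    unfolding eqpoll_def by blast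
  obtain C :: "nat set \<Rightarrow> real set" where C: "\<And>A. C A \<in> null_sets lebesgue"
    "\<And>Z. Z \<in> null_sets lebesgue \<Longrightarrow> \<exists>A. Z \<subseteq> C A"
    using ex_cofinal_null_sets_family by blast
  have "\<exists>w\<in>W. Z \<subseteq> C (h w)" if Z: "Z \<in> null_sets lebesgue" for Z
  proof -
    obtain A where "Z \<subseteq> C A"
      using C(2)[OF Z] by blast
    moreover have "A \<in> h ` W"
      using h by (simp add: bij_betw_def)
    ultimately show ?thesis
      by blast
  qed
  with W C(1) show ?thesis
    by (intro sierpinski_set_from_enumeration[of W lt "\<lambda>w. C (h w)"]) auto
qed

theorem theorem6p6:
  shows "(\<forall>S. sierpinski_set S \<longrightarrow>
            in_class S I_p I_sigma_u emptyFin \<and> in_class S I_p I_qn emptyFin \<and>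
            in_class S I_qn I_sigma_u emptyFin)
       \<and> (CH \<longrightarrow> (\<exists>X :: real set. uncountable X \<and>
            in_class X I_p I_sigma_u emptyFin \<and> in_class X I_p I_qn emptyFin \<and>
            in_class X I_qn I_sigma_u emptyFin))"
proof -
  have classes: "in_class S I_p I_sigma_u emptyFin \<and> in_class S I_p I_qn emptyFin \<and>
      in_class S I_qn I_sigma_u emptyFin" if "sierpinski_set S" for S
    using that unfolding sierpinski_set_def
    by (intro in_classes_if_I_p_imp_I_sigma_u sierpinski_I_p_imp_I_sigma_u) auto
  moreover have "CH \<longrightarrow> (\<exists>X :: real set. uncountable X \<and>
      in_class X I_p I_sigma_u emptyFin \<and> in_class X I_p I_qn emptyFin \<and>
      in_class X I_qn I_sigma_u emptyFin)"
    using classes CH_imp_ex_sierpinski_set unfolding sierpinski_set_def by blast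
  ultimately show ?thesis
    by blast
qed

end
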